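(* SW-PAV can fail to produce a committee satisfying IW-JR: there exists an approval-based SCV instance in which a committee maximizing the SW-PAV score does not satisfy IW-JR.
   Context: An approval-based sub-committee voting (SCV) instance consists of a set of voters $N=\{1,\ldots,n\}$, a finite set of candidates $C$ partitioned into candidate subsets $C_1,\ldots,C_\ell$, positive integer quotas $k_j\le |C_j|$, and approval ballots $A_i\subseteq C$ for $i\in N$. A committee is a set $W\subseteq C$ with $|W\cap C_j|=k_j$ for every $j$. Let $r(0)=0$ and $r(t)=\sum_{p=1}^t 1/p$ for $t\ge1$. The SW-PAV score of $W$ is $\sum_{i\in N} r(|W\cap A_i|)$. $W$ satisfies Intra-wise JR (IW-JR) if for every $X\subseteq N$ and every $j$, whenever $|X|\ge n/k_j$ and $|(\bigcap_{i\in X}A_i)\cap C_j|\ge 1$, we have $|W\cap C_j\cap \bigcup_{i\in X}A_i|\ge 1$. *)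

theory Defs
  imports Complex_Main
begin

definition scv_instance ::
  "nat \<Rightarrow> 'c set \<Rightarrow> nat \<Rightarrow> (nat \<Rightarrow> 'c set) \<Rightarrow> (nat \<Rightarrow> nat) \<Rightarrow> (nat \<Rightarrow> 'c set) \<Rightarrow> bool" where
  "scv_instance n C l Cs k A \<longleftrightarrow>
     n \<ge> 1 \<and> finite C \<and>
     (\<forall>j<l. Cs j \<noteq> {}) \<and>
     (\<forall>j<l. \<forall>j'<l. j \<noteq> j' \<longrightarrow> Cs j \<inter> Cs j' = {}) \<and>
     (\<Union>j<l. Cs j) = C \<and>
     (\<forall>j<l. 0 < k j \<and> k j \<le> card (Cs j)) \<and>
     (\<forall>i\<in>{1..n}. A i \<subseteq> C)"

definition is_committee ::
  "'c set \<Rightarrow> nat \<Rightarrow> (nat \<Rightarrow> 'c set) \<Rightarrow> (nat \<Rightarrow> nat) \<Rightarrow> 'c set \<Rightarrow> bool" where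
  "is_committee C l Cs k W \<longleftrightarrow> W \<subseteq> C \<and> (\<forall>j<l. card (W \<inter> Cs j) = k j)"

definition harm :: "nat \<Rightarrow> real" where
  "harm t = (\<Sum>p=1..t. 1 / real p)"

definition sw_pav_score :: "nat \<Rightarrow> (nat \<Rightarrow> 'c set) \<Rightarrow> 'c set \<Rightarrow> real" where
  "sw_pav_score n A W = (\<Sum>i\<in>{1..n}. harm (card (W \<inter> A i)))"

definition iw_jr ::
  "nat \<Rightarrow> nat \<Rightarrow> (nat \<Rightarrow> 'c set) \<Rightarrow> (nat \<Rightarrow> nat) \<Rightarrow> (nat \<Rightarrow> 'c set) \<Rightarrow> 'c set \<Rightarrow> bool" where
  "iw_jr n l Cs k A W \<longleftrightarrow>
     (\<forall>X. X \<subseteq> {1..n} \<longrightarrow> (\<forall>j<l.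
        real (card X) \<ge> real n / real (k j) \<and> (\<Inter>i\<in>X. A i) \<inter> Cs j \<noteq> {}
        \<longrightarrow> W \<inter> Cs j \<inter> (\<Union>i\<in>X. A i) \<noteq> {}))"

end

theory Submission
  imports Defs
begin

text \<open>Two voters and two blocks C0 = {0,1}, C1 = {2,3,4}, both with quota 2. Voter 1 approves
  {0,1,4}, voter 2 approves {2,3}. Every committee contains C0 and omits one candidate of C1:
  omitting 4 gives each voter two approved members (score 3/2 + 3/2 = 3), while omitting 2 or 3
  gives voter 1 three and voter 2 one (score 11/6 + 1 = 17/6 < 3). So the PAV winner elects {2,3}
  from C1, and voter 1, alone of size n / k = 1 and approving candidate 4 of C1, is left without
  any approved member of C1.\<close>

lemma harm_values: "harm (Suc 0) = 1" "harm 2 = 3 / 2" "harm 3 = 11 / 6"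
  by (simp_all add: harm_def numeral_eq_Suc)

lemma not_iw_jr_singleton:
  assumes "i \<in> {1..n}" "j < l" "n \<le> k j"
    and "A i \<inter> Cs j \<noteq> {}" "W \<inter> Cs j \<inter> A i = {}"
  shows "\<not> iw_jr n l Cs k A W"
proof -
  have "real n / real (k j) \<le> 1"
    using assms(1,3) by (simp add: divide_le_eq_1)
  then show ?thesis
    using assms unfolding iw_jr_def by (auto intro!: exI[of _ "{i}"] exI[of _ j])
qed

lemma subset_card_Suc_eq_remove:
  assumes "finite T" "S \<subseteq> T" "Suc (card S) = card T"
  shows "\<exists>x\<in>T. S = T - {x}"
proof -
  have "card (T - S) = 1"
    using assms by (simp add: card_Diff_subset finite_subset)
  then obtain x where "T - S = {x}"
    by (auto simp: card_1_singleton_iff)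
  then show ?thesis
    using assms(2) by blast
qed

definition example_blocks :: "nat \<Rightarrow> nat set" where
  "example_blocks j = (if j = 0 then {0, 1} else {2, 3, 4})"

definition example_ballots :: "nat \<Rightarrow> nat set" where
  "example_ballots i = (if i = 1 then {0, 1, 4} else {2, 3})"

lemma example_instance:
  "scv_instance 2 {0, 1, 2, 3, 4} 2 example_blocks (\<lambda>_. 2) example_ballots"
proof -
  have "{..<2::nat} = {0, 1}" by auto
  then show ?thesis
    unfolding scv_instance_def example_blocks_def example_ballots_def
    by (simp add: less_Suc_eq)
qed

lemma example_committee_iff:
  "is_committee {0, 1, 2, 3, 4} 2 example_blocks (\<lambda>_. 2) W \<longleftrightarrow>
     (\<exists>x\<in>{2, 3, 4}. W = {0, 1, 2, 3, 4} - {x})"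
proof
  assume W: "is_committee {0, 1, 2, 3, 4} 2 example_blocks (\<lambda>_. 2) W"
  then have "card (W \<inter> {0, 1}) = 2" "card (W \<inter> {2, 3, 4}) = 2"
    unfolding is_committee_def example_blocks_def by (auto dest: spec[of _ 0] spec[of _ 1])
  then have C0: "W \<inter> {0, 1} = {0, 1}"
    and "\<exists>x\<in>{2, 3, 4}. W \<inter> {2, 3, 4} = {2, 3, 4} - {x}"
    by (intro card_subset_eq subset_card_Suc_eq_remove; simp)+
  then obtain x where x: "x \<in> {2, 3, 4}" and C1: "W \<inter> {2, 3, 4} = {2, 3, 4} - {x}"
    by blast
  have "W = W \<inter> {0, 1} \<union> W \<inter> {2, 3, 4}"
    using W unfolding is_committee_def by blast
  also have "\<dots> = {0, 1, 2, 3, 4} - {x}"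
    using C0 C1 x by auto
  finally show "\<exists>x\<in>{2, 3, 4}. W = {0, 1, 2, 3, 4} - {x}"
    using x by blast
next
  assume "\<exists>x\<in>{2, 3, 4}. W = {0, 1, 2, 3, 4} - {x}"
  then obtain x where "x \<in> {2, 3, 4}" "W = {0, 1, 2, 3, 4} - {x}"
    by blast
  then have "W \<subseteq> {0, 1, 2, 3, 4}" "W \<inter> {0, 1} = {0, 1}" "card (W \<inter> {2, 3, 4}) = 2"
    by auto
  then show "is_committee {0, 1, 2, 3, 4} 2 example_blocks (\<lambda>_. 2) W"
    unfolding is_committee_def example_blocks_def by (auto simp: less_Suc_eq)
qed

lemma example_score_eq:
  "sw_pav_score 2 example_ballots W = harm (card (W \<inter> {0, 1, 4})) + harm (card (W \<inter> {2, 3}))"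
proof -
  have "{1..2::nat} = {1, 2}" by auto
  then show ?thesis
    unfolding sw_pav_score_def example_ballots_def by simp
qed

lemma example_score:
  assumes "x \<in> {2, 3, 4}"
  shows "sw_pav_score 2 example_ballots ({0, 1, 2, 3, 4} - {x}) = (if x = 4 then 3 else 17 / 6)"
proof -
  have "card (({0, 1, 2, 3, 4} - {x}) \<inter> {0, 1, 4}) = (if x = 4 then 2 else 3)"
    "card (({0, 1, 2, 3, 4} - {x}) \<inter> {2, 3}) = (if x = 4 then 2 else 1)"
    using assms by (auto simp: insert_Diff_if)
  then show ?thesis
    by (simp only: example_score_eq) (simp add: harm_values)
qed

theorem mainTheorem12:
  shows "\<exists>(n::nat) (C::nat set) (l::nat) (Cs::nat \<Rightarrow> nat set) (k::nat \<Rightarrow> nat)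
           (A::nat \<Rightarrow> nat set) (W::nat set).
           scv_instance n C l Cs k A \<and>
           is_committee C l Cs k W \<and>
           (\<forall>W'. is_committee C l Cs k W' \<longrightarrow> sw_pav_score n A W' \<le> sw_pav_score n A W) \<and>
           \<not> iw_jr n l Cs k A W"
proof -
  let ?C = "{0, 1, 2, 3, 4 :: nat}" and ?W = "{0, 1, 2, 3, 4} - {4 :: nat}"
  have committee: "is_committee ?C 2 example_blocks (\<lambda>_. 2) ?W"
    unfolding example_committee_iff by (rule bexI[of _ 4]) simp_all
  have optimal: "sw_pav_score 2 example_ballots W' \<le> sw_pav_score 2 example_ballots ?W"
    if "is_committee ?C 2 example_blocks (\<lambda>_. 2) W'" for W'
  proof -
    from that obtain x where "x \<in> {2, 3, 4}" "W' = ?C - {x}"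
      unfolding example_committee_iff by blast
    then show ?thesis
      using example_score[of 4] example_score[of x] by simp
  qed
  have "\<not> iw_jr 2 2 example_blocks (\<lambda>_. 2) example_ballots ?W"
    by (rule not_iw_jr_singleton[of 1 _ 1]) (simp_all add: example_blocks_def example_ballots_def)
  then show ?thesis
    using example_instance committee optimal by blast
qed

end
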